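(* Consider a slotted system with diversity. There are $N$ users, $N_{sub}\ge2$ sub-carriers and slots $1,\dots,T$. In each slot the BS chooses one user via a user scheduling algorithm $\pi_u$ and one sub-carrier via a sub-carrier choosing algorithm $\pi_s$; these may be randomized and may depend on past adversarial actions. It then sends an update to the chosen user on the chosen sub-carrier. The adversary uses a blocking matrix $\sigma\in\{0,1\}^{N_{sub}\times T}$, where $\sigma_j(t)=0$ means sub-carrier $j$ is blocked in slot $t$. Feasibility means $\sum_{j,t}(1-\sigma_j(t))\le\alpha T$ and at most one sub-carrier is blocked per slot, where $0<\alpha<1$. Ages satisfy $a_i(1)=1$, $a_i(t+1)=1$ if user $i$ is chosen in slot $t$ on an unblocked sub-carrier, and $a_i(t+1)=a_i(t)+1$ otherwise. Let $\Delta^{\pi_u,\pi_s,\sigma}=\frac1T\sum_{t=1}^T\frac1N\sum_i\mathbb E[a_i(t)]$ and $\Delta^*(T)=\sup_\sigma\inf_{\pi_u,\pi_s}\Delta^{\pi_u,\pi_s,\sigma}$. Then $\liminf_{T\to\infty}\Delta^*(T)\ge\frac{N+1}{2}$. *)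

theory Defs
  imports "HOL-Probability.Probability"
begin

text \<open>Slots are numbered 1,2,...; users 0..<N; sub-carriers 0..<Nsub.
  A schedule sch maps a slot t to the pair (chosen user, chosen sub-carrier).
  A blocking matrix sigma j t = True means sub-carrier j is NOT blocked in slot t
  (i.e. the paper's value 1), False means blocked (value 0).\<close>

text \<open>age sigma sch i k is the age a_i(k+1) of user i at slot k+1.\<close>
primrec age :: "(nat \<Rightarrow> nat \<Rightarrow> bool) \<Rightarrow> (nat \<Rightarrow> nat \<times> nat) \<Rightarrow> nat \<Rightarrow> nat \<Rightarrow> nat" where
  "age \<sigma> sch i 0 = 1"
| "age \<sigma> sch i (Suc k) =
     (if fst (sch (Suc k)) = i \<and> \<sigma> (snd (sch (Suc k))) (Suc k) then 1
      else age \<sigma> sch i k + 1)"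

definition feasible_block :: "nat \<Rightarrow> nat \<Rightarrow> real \<Rightarrow> (nat \<Rightarrow> nat \<Rightarrow> bool) \<Rightarrow> bool" where
  "feasible_block Nsub T \<alpha> \<sigma> \<longleftrightarrow>
     real (card {(j, t). j < Nsub \<and> t \<in> {1..T} \<and> \<not> \<sigma> j t}) \<le> \<alpha> * real T \<and>
     (\<forall>t\<in>{1..T}. card {j. j < Nsub \<and> \<not> \<sigma> j t} \<le> 1)"

text \<open>Joint (possibly randomized) user/sub-carrier scheduling policies, given as the
  distribution they induce on schedules.\<close>
definition policies :: "nat \<Rightarrow> nat \<Rightarrow> (nat \<Rightarrow> nat \<times> nat) pmf set" where
  "policies N Nsub = {p. \<forall>sch\<in>set_pmf p. \<forall>t. fst (sch t) < N \<and> snd (sch t) < Nsub}"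

definition avg_age :: "nat \<Rightarrow> nat \<Rightarrow> (nat \<Rightarrow> nat \<Rightarrow> bool) \<Rightarrow> (nat \<Rightarrow> nat \<times> nat) pmf \<Rightarrow> real" where
  "avg_age N T \<sigma> p =
     (1 / real T) * (\<Sum>k<T. (1 / real N) *
        (\<Sum>i<N. measure_pmf.expectation p (\<lambda>sch. real (age \<sigma> sch i k))))"

definition opt_age :: "nat \<Rightarrow> nat \<Rightarrow> real \<Rightarrow> nat \<Rightarrow> real" where
  "opt_age N Nsub \<alpha> T =
     (SUP \<sigma>\<in>{\<sigma>. feasible_block Nsub T \<alpha> \<sigma>}. INF p\<in>policies N Nsub. avg_age N T \<sigma> p)"

end

theory Submission
  imports Defs
begin

text \<open>The adversary does not even have to block: whatever the schedule, a user whose age at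
  slot k+1 is at most j was served in one of the last j slots, and distinct users were served in
  distinct slots, so at most j users have age at most j. Once k+1 \<ge> N the N ages therefore sum
  to at least 1 + 2 + ... + N, so the time average of the mean age is at least
  (N+1)/2 \<cdot> (1 - (N-1)/T), which tends to (N+1)/2.\<close>

lemma double_sum_diff_lessThan: "2 * (\<Sum>j<n. n - j) = n * (n + 1 :: nat)"
proof -
  have "(\<Sum>j<n. n - j) = (\<Sum>j<n. Suc j)"
    by (subst sum.nat_diff_reindex[symmetric]) (simp add: Suc_diff_Suc)
  also have "\<dots> = (\<Sum>j = Suc 0..n. j)"
    by (induction n) auto
  finally show ?thesis
    using double_gauss_sum_from_Suc_0[of n, where 'a = nat] by simp
qed

lemma sum_ge_triangular_if_sparse:
  fixes f :: "'a \<Rightarrow> nat"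
  assumes "finite A"
    and sparse: "\<And>j. j < card A \<Longrightarrow> card {i\<in>A. f i \<le> j} \<le> j"
  shows "card A * (card A + 1) \<le> 2 * (\<Sum>i\<in>A. f i)"
proof -
  let ?n = "card A"
  have "(\<Sum>j<?n. ?n - j) \<le> (\<Sum>j<?n. card {i\<in>A. j < f i})"
  proof (rule sum_mono)
    fix j assume "j \<in> {..<?n}"
    then have "card {i\<in>A. f i \<le> j} \<le> j" by (intro sparse) simp
    moreover have "card {i\<in>A. j < f i} = ?n - card {i\<in>A. f i \<le> j}"
      using \<open>finite A\<close> by (subst card_Diff_subset[symmetric]) (auto intro: arg_cong[where f = card])
    ultimately show "?n - j \<le> card {i\<in>A. j < f i}" by simp
  qed
  also have "\<dots> = (\<Sum>i\<in>A. card {j\<in>{..<?n}. j < f i})"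
    using sum.swap_restrict[OF finite_lessThan \<open>finite A\<close>, of "\<lambda>_ _. 1::nat" "\<lambda>j i. j < f i"]
    by simp
  also have "\<dots> \<le> (\<Sum>i\<in>A. card {..<f i})"
    by (intro sum_mono card_mono) auto
  also have "\<dots> = (\<Sum>i\<in>A. f i)"
    by simp
  finally show ?thesis
    using double_sum_diff_lessThan[of ?n] by linarith
qed

lemma age_pos: "0 < age \<sigma> sch i k"
  by (induction k) auto

lemma age_le_Suc: "age \<sigma> sch i k \<le> Suc k"
  by (induction k) auto

lemma user_at_last_update:
  assumes "age \<sigma> sch i k \<le> k"
  shows "fst (sch (Suc k - age \<sigma> sch i k)) = i"
  using assms
proof (induction k)
  case 0
  then show ?case using age_pos[of \<sigma> sch i 0] by simp
next
  case (Suc k)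
  show ?case
  proof (cases "fst (sch (Suc k)) = i \<and> \<sigma> (snd (sch (Suc k))) (Suc k)")
    case True
    then show ?thesis by simp
  next
    case False
    then have "age \<sigma> sch i (Suc k) = age \<sigma> sch i k + 1"
      by (simp only: age.simps(2) if_False)
    then show ?thesis using Suc by simp
  qed
qed

lemma card_age_le:
  assumes "j \<le> k"
  shows "card {i\<in>A. age \<sigma> sch i k \<le> j} \<le> j"
proof -
  let ?young = "{i\<in>A. age \<sigma> sch i k \<le> j}"
  let ?last_update = "\<lambda>i. Suc k - age \<sigma> sch i k"
  have "inj_on ?last_update ?young"
    using assms by (intro inj_on_inverseI[where g = "\<lambda>t. fst (sch t)"] user_at_last_update) auto
  moreover have "?last_update ` ?young \<subseteq> {Suc k - j..<Suc k}"
    using assms by (auto simp: age_pos intro!: diff_le_mono2 diff_less)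
  ultimately have "card ?young \<le> card {Suc k - j..<Suc k}"
    by (intro card_inj_on_le) auto
  then show ?thesis using assms by simp
qed

lemma sum_age_ge:
  assumes "N - 1 \<le> k"
  shows "N * (N + 1) \<le> 2 * (\<Sum>i<N. age \<sigma> sch i k)"
proof -
  have "card {..<N} * (card {..<N} + 1) \<le> 2 * (\<Sum>i<N. age \<sigma> sch i k)"
  proof (rule sum_ge_triangular_if_sparse)
    fix j assume "j < card {..<N}"
    then show "card {i\<in>{..<N}. age \<sigma> sch i k \<le> j} \<le> j"
      using assms by (intro card_age_le) simp
  qed simp
  then show ?thesis by simp
qed

lemma mean_le:
  fixes x :: "nat \<Rightarrow> real"
  assumes "\<And>i. i < n \<Longrightarrow> x i \<le> B" and "0 \<le> B"
  shows "(1 / real n) * (\<Sum>i<n. x i) \<le> B"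
proof (cases "n = 0")
  case False
  have "(\<Sum>i<n. x i) \<le> real n * B"
    using sum_bounded_above[of "{..<n}" x B] assms(1) by simp
  then show ?thesis using False by (simp add: field_simps)
qed (simp add: assms(2))

lemma integrable_age: "integrable (measure_pmf p) (\<lambda>sch. real (age \<sigma> sch i k))"
  by (rule measure_pmf.integrable_const_bound[where B = "real (Suc k)"])
    (simp_all add: age_le_Suc del: of_nat_Suc)

lemma expected_age_nonneg: "0 \<le> measure_pmf.expectation p (\<lambda>sch. real (age \<sigma> sch i k))"
  by (rule integral_nonneg_AE) simp

lemma expected_age_le: "measure_pmf.expectation p (\<lambda>sch. real (age \<sigma> sch i k)) \<le> real (Suc k)"
  by (rule measure_pmf.integral_le_const) (simp_all add: integrable_age age_le_Suc del: of_nat_Suc)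

lemma sum_expected_age_ge:
  assumes "N - 1 \<le> k"
  shows "real N * (real N + 1) / 2
    \<le> (\<Sum>i<N. measure_pmf.expectation p (\<lambda>sch. real (age \<sigma> sch i k)))"
proof -
  have "real N * (real N + 1) / 2
      \<le> measure_pmf.expectation p (\<lambda>sch. \<Sum>i<N. real (age \<sigma> sch i k))"
  proof (rule measure_pmf.integral_ge_const)
    show "integrable (measure_pmf p) (\<lambda>sch. \<Sum>i<N. real (age \<sigma> sch i k))"
      by (intro Bochner_Integration.integrable_sum integrable_age)
    have "real N * (real N + 1) / 2 \<le> (\<Sum>i<N. real (age \<sigma> sch i k))" for sch
      using of_nat_mono[OF sum_age_ge[OF assms, of \<sigma> sch]] by (simp add: algebra_simps)
    then show "AE sch in measure_pmf p. real N * (real N + 1) / 2 \<le> (\<Sum>i<N. real (age \<sigma> sch i k))"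
      by simp
  qed
  also have "\<dots> = (\<Sum>i<N. measure_pmf.expectation p (\<lambda>sch. real (age \<sigma> sch i k)))"
    by (intro Bochner_Integration.integral_sum integrable_age)
  finally show ?thesis .
qed

lemma avg_age_nonneg: "0 \<le> avg_age N T \<sigma> p"
  unfolding avg_age_def by (intro mult_nonneg_nonneg sum_nonneg expected_age_nonneg) auto

lemma avg_age_le: "avg_age N T \<sigma> p \<le> real T"
proof -
  have "(1 / real N) * (\<Sum>i<N. measure_pmf.expectation p (\<lambda>sch. real (age \<sigma> sch i k)))
      \<le> real T" if "k < T" for k
    using that by (intro mean_le order.trans[OF expected_age_le]) simp_all
  then show ?thesis
    unfolding avg_age_def by (rule mean_le) simp_all
qed

lemma avg_age_ge:
  assumes "1 \<le> N" and "N \<le> T"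
  shows "(real N + 1) / 2 * (1 - (real N - 1) / real T) \<le> avg_age N T \<sigma> p"
proof -
  define mean where
    "mean k = (1 / real N) * (\<Sum>i<N. measure_pmf.expectation p (\<lambda>sch. real (age \<sigma> sch i k)))"
    for k
  have "real (T - (N - 1)) * ((real N + 1) / 2) = (\<Sum>k\<in>{N - 1..<T}. (real N + 1) / 2)"
    by simp
  also have "\<dots> \<le> (\<Sum>k\<in>{N - 1..<T}. mean k)"
  proof (rule sum_mono)
    fix k assume "k \<in> {N - 1..<T}"
    then have "real N * ((real N + 1) / 2)
        \<le> (\<Sum>i<N. measure_pmf.expectation p (\<lambda>sch. real (age \<sigma> sch i k)))"
      using sum_expected_age_ge[of N k] by simp
    then show "(real N + 1) / 2 \<le> mean k"
      using assms(1) by (simp add: mean_def field_simps)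
  qed
  also have "\<dots> \<le> (\<Sum>k<T. mean k)"
    by (rule sum_mono2) (auto simp: mean_def intro!: divide_nonneg_nonneg sum_nonneg expected_age_nonneg)
  finally have "(1 / real T) * (real (T - (N - 1)) * ((real N + 1) / 2)) \<le> avg_age N T \<sigma> p"
    unfolding avg_age_def mean_def by (intro mult_left_mono) simp_all
  then show ?thesis
    using assms by (simp add: of_nat_diff field_simps)
qed

lemma feasible_block_unblocked: "0 \<le> \<alpha> \<Longrightarrow> feasible_block Nsub T \<alpha> (\<lambda>_ _. True)"
  unfolding feasible_block_def by simp

lemma policies_nonempty: "0 < N \<Longrightarrow> 0 < Nsub \<Longrightarrow> policies N Nsub \<noteq> {}"
  unfolding policies_def by (auto intro!: exI[of _ "return_pmf (\<lambda>_. (0, 0))"])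

lemma le_opt_age:
  assumes "policies N Nsub \<noteq> {}" and "feasible_block Nsub T \<alpha> \<sigma>"
    and "\<And>p. p \<in> policies N Nsub \<Longrightarrow> c \<le> avg_age N T \<sigma> p"
  shows "c \<le> opt_age N Nsub \<alpha> T"
proof -
  have "c \<le> (INF p\<in>policies N Nsub. avg_age N T \<sigma> p)"
    using assms(1,3) by (rule cINF_greatest)
  also have "\<dots> \<le> opt_age N Nsub \<alpha> T"
    unfolding opt_age_def
  proof (rule cSUP_upper)
    show "\<sigma> \<in> {\<sigma>. feasible_block Nsub T \<alpha> \<sigma>}"
      using assms(2) by simp
    obtain p where p: "p \<in> policies N Nsub"
      using assms(1) by blast
    have "(INF p\<in>policies N Nsub. avg_age N T \<sigma>' p) \<le> real T" for \<sigma>'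
      by (rule order.trans[OF cINF_lower[OF bdd_belowI2 p] avg_age_le]) (rule avg_age_nonneg)
    then show "bdd_above ((\<lambda>\<sigma>. INF p\<in>policies N Nsub. avg_age N T \<sigma> p) ` {\<sigma>. feasible_block Nsub T \<alpha> \<sigma>})"
      by (intro bdd_aboveI2)
  qed
  finally show ?thesis .
qed

theorem theorem10:
  fixes N Nsub :: nat and \<alpha> :: real
  assumes "N \<ge> 1" and "Nsub \<ge> 2" and "0 < \<alpha>" and "\<alpha> < 1"
  shows "Liminf sequentially (\<lambda>T. ereal (opt_age N Nsub \<alpha> T)) \<ge> ereal ((real N + 1) / 2)"
proof -
  define bound where "bound T = (real N + 1) / 2 * (1 - (real N - 1) / real T)" for T :: nat
  have bound_le: "\<forall>\<^sub>F T in sequentially. bound T \<le> opt_age N Nsub \<alpha> T"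
  proof (rule eventually_mono[OF eventually_ge_at_top[of N]])
    fix T assume "N \<le> T"
    then show "bound T \<le> opt_age N Nsub \<alpha> T"
      unfolding bound_def using assms
      by (intro le_opt_age[OF policies_nonempty feasible_block_unblocked] avg_age_ge) auto
  qed
  have "bound \<longlonglongrightarrow> (real N + 1) / 2 * (1 - 0)"
    unfolding bound_def by (intro tendsto_intros lim_const_over_n)
  then have "ereal ((real N + 1) / 2) = Liminf sequentially (\<lambda>T. ereal (bound T))"
    by (intro lim_imp_Liminf[symmetric] tendsto_ereal) simp_all
  also have "\<dots> \<le> Liminf sequentially (\<lambda>T. ereal (opt_age N Nsub \<alpha> T))"
    using bound_le by (intro Liminf_mono) (simp add: eventually_mono)
  finally show ?thesis .
qed

end
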